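(* Let $\boldsymbol\pi\in\mathcal P^+$ and let $V\in\hat{\mathcal F}$ be a self-extension of $V(\boldsymbol\pi)$. Then $V$ is non-trivial if and only if $V_{\mathrm{wt}\boldsymbol\pi}$ contains a unique (up to scalars) highest-$\ell$-weight vector. Moreover, if $V$ is non-trivial and $v\in V_{\mathrm{wt}\boldsymbol\pi}$ is not an $\ell$-weight vector, then $V=\hat{\mathbf U}_qv$.
   Context: Setting: $R$ irreducible reduced root system with simple roots indexed by $I$, fundamental weights $\omega_i$, weight lattice $P$, $d_i$ symmetrizing integers, $q\in\mathbb C^\times$ not a root of unity, $q_i=q^{d_i}$, $[m]_i=(q_i^m-q_i^{-m})/(q_i-q_i^{-1})$. $\hat{\mathbf U}_q$ is the quantum loop algebra of $R$ with Drinfeld generators $x^\pm_{i,r}$ ($r\in\mathbb Z$), $h_{i,s}$ ($s\in\mathbb Z\setminus\{0\}$), $k_i^{\pm1}$. A module $V$ is of type 1 if $V=\bigoplus_{\mu\in P}V_\mu$, $V_\mu=\{v:k_iv=q_i^{\mu_i}v\}$ where $\mu=\sum\mu_i\omega_i$; $\hat{\mathcal F}$ is the category of finite-dimensional type 1 modules. An $\ell$-weight vector is a simultaneous eigenvector of all $h_{i,s}$; a highest-$\ell$-weight vector is an $\ell$-weight vector lying in some $V_\mu$ and annihilated by all $x^+_{i,r}$. $\mathcal P^+$ is the monoid of $I$-tuples $\boldsymbol\pi=(\pi_i)$ of polynomials with constant term 1, $\mathrm{wt}\boldsymbol\pi=\sum_i(\deg\pi_i)\omega_i$, and $V(\boldsymbol\pi)$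 is the simple object of $\hat{\mathcal F}$ generated by a highest-$\ell$-weight vector $v(\boldsymbol\pi)\in V(\boldsymbol\pi)_{\mathrm{wt}\boldsymbol\pi}$ with $h_{i,s}$-eigenvalues $h_{i,s}(\boldsymbol\pi)$ given by $\exp(-\sum_{s\ge1}h_{i,\pm s}(\boldsymbol\pi)u^s/[s]_i)=\pi_i^\pm(u)$ ($\pi_i^+=\pi_i$, $\pi_i^-(u)=u^{\deg\pi_i}\pi_i(u^{-1})$ normalized to constant term 1). A self-extension of $V(\boldsymbol\pi)$ is an object $V$ of $\hat{\mathcal F}$ fitting in a short exact sequence $0\to V(\boldsymbol\pi)\to V\to V(\boldsymbol\pi)\to0$; it is trivial if $V\cong V(\boldsymbol\pi)\oplus V(\boldsymbol\pi)$ and non-trivial otherwise. *)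

theory Defs
  imports "HOL-Analysis.Analysis" "HOL-Computational_Algebra.Polynomial_FPS"
begin

text \<open>The irreducible reduced root system R enters only through its Cartan matrix
  a (indexed by the simple roots, type 'i) and the symmetrizing integers d.
  We characterise these as the indecomposable, symmetrizable, positive definite
  generalised Cartan matrices, i.e. the Cartan matrices of finite type.\<close>

definition finite_type_cartan :: "('i::finite \<Rightarrow> 'i \<Rightarrow> int) \<Rightarrow> ('i \<Rightarrow> nat) \<Rightarrow> bool" where
  "finite_type_cartan a d \<longleftrightarrow>
     (\<forall>i. a i i = 2) \<and> (\<forall>i j. i \<noteq> j \<longrightarrow> a i j \<le> 0) \<and>
     (\<forall>i. 0 < d i) \<and> (\<forall>i j. int (d i) * a i j = int (d j) * a j i) \<and>
     (\<forall>x::'i \<Rightarrow> real. x \<noteq> (\<lambda>_. 0) \<longrightarrow>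
        (\<Sum>i\<in>UNIV. \<Sum>j\<in>UNIV. x i * real (d i) * of_int (a i j) * x j) > 0) \<and>
     (\<forall>J::'i set. J \<noteq> {} \<and> J \<noteq> UNIV \<longrightarrow> (\<exists>i\<in>J. \<exists>j. j \<notin> J \<and> a i j \<noteq> 0))"

definition qi :: "complex \<Rightarrow> ('i \<Rightarrow> nat) \<Rightarrow> 'i \<Rightarrow> complex" where
  "qi q d i = q ^ d i"

definition qnum :: "complex \<Rightarrow> int \<Rightarrow> complex" where
  "qnum x m = (x powi m - x powi (- m)) / (x - inverse x)"

definition qfact :: "complex \<Rightarrow> nat \<Rightarrow> complex" where
  "qfact x n = (\<Prod>t\<in>{1..n}. qnum x (int t))"

definition qbinom :: "complex \<Rightarrow> nat \<Rightarrow> nat \<Rightarrow> complex" where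
  "qbinom x m k = qfact x m / (qfact x k * qfact x (m - k))"

datatype 'i gen = Xp 'i int | Xm 'i int | Hg 'i int | Kg 'i | Kinv 'i

text \<open>h_{i,0} is not a generator.\<close>
definition valid_gen :: "'i gen \<Rightarrow> bool" where
  "valid_gen g \<longleftrightarrow> (\<forall>i. g \<noteq> Hg i 0)"

type_synonym ('i, 'n) rep = "'i gen \<Rightarrow> complex^'n^'n"

definition cscale :: "complex \<Rightarrow> complex^'n^'n \<Rightarrow> complex^'n^'n" where
  "cscale c M = (\<chi> a b. c * M $ a $ b)"

definition mprod :: "(complex^'n^'n) list \<Rightarrow> complex^'n^'n" where
  "mprod ms = foldr (\<lambda>A B. A ** B) ms (mat 1)"

definition compositions :: "nat \<Rightarrow> nat \<Rightarrow> nat list set" where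
  "compositions r k = {ss. length ss = k \<and> (\<forall>x\<in>set ss. 0 < x) \<and> sum_list ss = r}"

text \<open>Coefficient of u^r in exp(\<Sum>_{s\<ge>1} Hs s u^s) (formal power series with matrix coefficients).\<close>
definition exp_coeff :: "(nat \<Rightarrow> complex^'n^'n) \<Rightarrow> nat \<Rightarrow> complex^'n^'n" where
  "exp_coeff Hs r = (\<Sum>k\<in>{..r}. \<Sum>ss\<in>compositions r k. cscale (1 / of_nat (fact k)) (mprod (map Hs ss)))"

text \<open>\<Sum>_{r\<ge>0} psi^+_{i,r} u^r = k_i exp((q_i-q_i^{-1}) \<Sum>_{s\<ge>1} h_{i,s} u^s), psi^+_{i,r}=0 for r<0;
  \<Sum>_{r\<ge>0} psi^-_{i,-r} u^r = k_i^{-1} exp(-(q_i-q_i^{-1}) \<Sum>_{s\<ge>1} h_{i,-s} u^s), psi^-_{i,r}=0 for r>0.\<close>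
definition psi_plus :: "complex \<Rightarrow> ('i \<Rightarrow> nat) \<Rightarrow> ('i, 'n) rep \<Rightarrow> 'i \<Rightarrow> int \<Rightarrow> complex^'n^'n" where
  "psi_plus q d \<rho> i m = (if m < 0 then 0 else
     \<rho> (Kg i) ** exp_coeff (\<lambda>s. cscale (qi q d i - inverse (qi q d i)) (\<rho> (Hg i (int s)))) (nat m))"

definition psi_minus :: "complex \<Rightarrow> ('i \<Rightarrow> nat) \<Rightarrow> ('i, 'n) rep \<Rightarrow> 'i \<Rightarrow> int \<Rightarrow> complex^'n^'n" where
  "psi_minus q d \<rho> i m = (if 0 < m then 0 else
     \<rho> (Kinv i) ** exp_coeff (\<lambda>s. cscale (- (qi q d i - inverse (qi q d i))) (\<rho> (Hg i (- int s)))) (nat (- m)))"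

definition serre_sum :: "complex \<Rightarrow> ('i \<Rightarrow> nat) \<Rightarrow> (int \<Rightarrow> complex^'n^'n) \<Rightarrow> complex^'n^'n \<Rightarrow> complex \<Rightarrow> nat
     \<Rightarrow> (nat \<Rightarrow> int) \<Rightarrow> complex^'n^'n" where
  "serre_sum q d Xi Y x m r =
     (\<Sum>\<sigma>\<in>{\<sigma>. \<sigma> permutes {..<m}}. \<Sum>k\<in>{..m}.
        cscale ((-1) ^ k * qbinom x m k)
          (mprod (map (\<lambda>t. Xi (r (\<sigma> t))) [0..<k]) ** Y ** mprod (map (\<lambda>t. Xi (r (\<sigma> t))) [k..<m])))"

definition qloop_rep :: "('i::finite \<Rightarrow> 'i \<Rightarrow> int) \<Rightarrow> ('i \<Rightarrow> nat) \<Rightarrow> complex \<Rightarrow> ('i, 'n::finite) rep \<Rightarrow> bool" where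
  "qloop_rep a d q \<rho> \<longleftrightarrow>
    (\<forall>i. \<rho> (Kg i) ** \<rho> (Kinv i) = mat 1 \<and> \<rho> (Kinv i) ** \<rho> (Kg i) = mat 1) \<and>
    (\<forall>i j. \<rho> (Kg i) ** \<rho> (Kg j) = \<rho> (Kg j) ** \<rho> (Kg i)) \<and>
    (\<forall>i j s. s \<noteq> 0 \<longrightarrow> \<rho> (Kg i) ** \<rho> (Hg j s) = \<rho> (Hg j s) ** \<rho> (Kg i)) \<and>
    (\<forall>i j r. \<rho> (Kg i) ** \<rho> (Xp j r) ** \<rho> (Kinv i) = cscale (qi q d i powi a i j) (\<rho> (Xp j r))) \<and>
    (\<forall>i j r. \<rho> (Kg i) ** \<rho> (Xm j r) ** \<rho> (Kinv i) = cscale (qi q d i powi (- a i j)) (\<rho> (Xm j r))) \<and>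
    (\<forall>i j s t. s \<noteq> 0 \<and> t \<noteq> 0 \<longrightarrow> \<rho> (Hg i s) ** \<rho> (Hg j t) = \<rho> (Hg j t) ** \<rho> (Hg i s)) \<and>
    (\<forall>i j s r. s \<noteq> 0 \<longrightarrow> \<rho> (Hg i s) ** \<rho> (Xp j r) - \<rho> (Xp j r) ** \<rho> (Hg i s)
        = cscale (qnum (qi q d i) (s * a i j) / of_int s) (\<rho> (Xp j (r + s)))) \<and>
    (\<forall>i j s r. s \<noteq> 0 \<longrightarrow> \<rho> (Hg i s) ** \<rho> (Xm j r) - \<rho> (Xm j r) ** \<rho> (Hg i s)
        = cscale (- (qnum (qi q d i) (s * a i j) / of_int s)) (\<rho> (Xm j (r + s)))) \<and>
    (\<forall>i j r s. \<rho> (Xp i (r + 1)) ** \<rho> (Xp j s) - cscale (qi q d i powi a i j) (\<rho> (Xp j s) ** \<rho> (Xp i (r + 1)))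
        = cscale (qi q d i powi a i j) (\<rho> (Xp i r) ** \<rho> (Xp j (s + 1))) - \<rho> (Xp j (s + 1)) ** \<rho> (Xp i r)) \<and>
    (\<forall>i j r s. \<rho> (Xm i (r + 1)) ** \<rho> (Xm j s) - cscale (qi q d i powi (- a i j)) (\<rho> (Xm j s) ** \<rho> (Xm i (r + 1)))
        = cscale (qi q d i powi (- a i j)) (\<rho> (Xm i r) ** \<rho> (Xm j (s + 1))) - \<rho> (Xm j (s + 1)) ** \<rho> (Xm i r)) \<and>
    (\<forall>i j r s. \<rho> (Xp i r) ** \<rho> (Xm j s) - \<rho> (Xm j s) ** \<rho> (Xp i r)
        = (if i = j then cscale (inverse (qi q d i - inverse (qi q d i)))
                           (psi_plus q d \<rho> i (r + s) - psi_minus q d \<rho> i (r + s)) else 0)) \<and>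
    (\<forall>i j. i \<noteq> j \<longrightarrow> (\<forall>r s.
        serre_sum q d (\<lambda>t. \<rho> (Xp i t)) (\<rho> (Xp j s)) (qi q d i) (nat (1 - a i j)) r = 0 \<and>
        serre_sum q d (\<lambda>t. \<rho> (Xm i t)) (\<rho> (Xm j s)) (qi q d i) (nat (1 - a i j)) r = 0))"

text \<open>Weights \<mu> = \<Sum> \<mu>_i \<omega>_i \<in> P are given by their coordinates \<mu> :: 'i \<Rightarrow> int.\<close>
definition weight_space :: "complex \<Rightarrow> ('i \<Rightarrow> nat) \<Rightarrow> ('i, 'n::finite) rep \<Rightarrow> ('i \<Rightarrow> int) \<Rightarrow> (complex^'n) set" where
  "weight_space q d \<rho> \<mu> = {v. \<forall>i. \<rho> (Kg i) *v v = (qi q d i powi \<mu> i) *s v}"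

definition type1 :: "complex \<Rightarrow> ('i \<Rightarrow> nat) \<Rightarrow> ('i, 'n::finite) rep \<Rightarrow> bool" where
  "type1 q d \<rho> \<longleftrightarrow> (\<forall>v. \<exists>M f. finite M \<and> (\<forall>\<mu>\<in>M. f \<mu> \<in> weight_space q d \<rho> \<mu>) \<and> v = (\<Sum>\<mu>\<in>M. f \<mu>))"

text \<open>An object of the category F-hat: a finite-dimensional type 1 module, realised on complex^'n.\<close>
definition in_Fhat :: "('i::finite \<Rightarrow> 'i \<Rightarrow> int) \<Rightarrow> ('i \<Rightarrow> nat) \<Rightarrow> complex \<Rightarrow> ('i, 'n::finite) rep \<Rightarrow> bool" where
  "in_Fhat a d q \<rho> \<longleftrightarrow> qloop_rep a d q \<rho> \<and> type1 q d \<rho>"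

definition csubspace :: "(complex^'n) set \<Rightarrow> bool" where
  "csubspace U \<longleftrightarrow> 0 \<in> U \<and> (\<forall>x\<in>U. \<forall>y\<in>U. x + y \<in> U) \<and> (\<forall>c. \<forall>x\<in>U. c *s x \<in> U)"

definition submodule :: "('i, 'n::finite) rep \<Rightarrow> (complex^'n) set \<Rightarrow> bool" where
  "submodule \<rho> U \<longleftrightarrow> csubspace U \<and> (\<forall>g. valid_gen g \<longrightarrow> (\<forall>v\<in>U. \<rho> g *v v \<in> U))"

definition generated_submodule :: "('i, 'n::finite) rep \<Rightarrow> complex^'n \<Rightarrow> (complex^'n) set" where
  "generated_submodule \<rho> v = \<Inter>{U. submodule \<rho> U \<and> v \<in> U}"

definition ell_weight_vector :: "('i, 'n::finite) rep \<Rightarrow> complex^'n \<Rightarrow> bool" where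
  "ell_weight_vector \<rho> v \<longleftrightarrow> v \<noteq> 0 \<and> (\<exists>c. \<forall>i s. s \<noteq> 0 \<longrightarrow> \<rho> (Hg i s) *v v = c i s *s v)"

definition hlw_vector :: "complex \<Rightarrow> ('i \<Rightarrow> nat) \<Rightarrow> ('i, 'n::finite) rep \<Rightarrow> ('i \<Rightarrow> int) \<Rightarrow> complex^'n \<Rightarrow> bool" where
  "hlw_vector q d \<rho> \<mu> v \<longleftrightarrow> ell_weight_vector \<rho> v \<and> v \<in> weight_space q d \<rho> \<mu> \<and>
     (\<forall>i r. \<rho> (Xp i r) *v v = 0)"

definition drinfeld_poly :: "('i \<Rightarrow> complex poly) \<Rightarrow> bool" where
  "drinfeld_poly \<pi> \<longleftrightarrow> (\<forall>i. coeff (\<pi> i) 0 = 1)"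

definition wt :: "('i \<Rightarrow> complex poly) \<Rightarrow> 'i \<Rightarrow> int" where
  "wt \<pi> = (\<lambda>i. int (degree (\<pi> i)))"

text \<open>pi^-(u) = u^{deg pi} pi(u^{-1}), normalised to have constant term 1.\<close>
definition pi_minus :: "complex poly \<Rightarrow> complex poly" where
  "pi_minus p = smult (inverse (lead_coeff p)) (reflect_poly p)"

text \<open>hv i s = h_{i,s}(\<pi>): exp(-\<Sum>_{s\<ge>1} h_{i,\<plusminus>s}(\<pi>) u^s/[s]_i) = \<pi>_i^\<plusminus>(u).\<close>
definition ell_weight_of :: "complex \<Rightarrow> ('i \<Rightarrow> nat) \<Rightarrow> ('i \<Rightarrow> complex poly) \<Rightarrow> ('i \<Rightarrow> int \<Rightarrow> complex) \<Rightarrow> bool" where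
  "ell_weight_of q d \<pi> hv \<longleftrightarrow> (\<forall>i.
     fps_exp 1 oo Abs_fps (\<lambda>n. if n = 0 then 0 else - hv i (int n) / qnum (qi q d i) (int n))
       = fps_of_poly (\<pi> i) \<and>
     fps_exp 1 oo Abs_fps (\<lambda>n. if n = 0 then 0 else - hv i (- int n) / qnum (qi q d i) (int n))
       = fps_of_poly (pi_minus (\<pi> i)))"

text \<open>The subquotient U/W (W \<subseteq> U submodules) is isomorphic to V(\<pi>): it is a simple module
  containing a highest-ell-weight vector (the image of v) of weight wt \<pi> and ell-weight given by \<pi>.\<close>
definition subquot_is_V :: "complex \<Rightarrow> ('i \<Rightarrow> nat) \<Rightarrow> ('i, 'n::finite) rep \<Rightarrow> ('i \<Rightarrow> complex poly)
     \<Rightarrow> (complex^'n) set \<Rightarrow> (complex^'n) set \<Rightarrow> bool" where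
  "subquot_is_V q d \<rho> \<pi> W U \<longleftrightarrow>
     submodule \<rho> W \<and> submodule \<rho> U \<and> W \<subset> U \<and>
     (\<forall>U'. submodule \<rho> U' \<and> W \<subseteq> U' \<and> U' \<subseteq> U \<longrightarrow> U' = W \<or> U' = U) \<and>
     (\<exists>v\<in>U - W. \<exists>hv. ell_weight_of q d \<pi> hv \<and>
        (\<forall>i. \<rho> (Kg i) *v v - (qi q d i powi wt \<pi> i) *s v \<in> W) \<and>
        (\<forall>i r. \<rho> (Xp i r) *v v \<in> W) \<and>
        (\<forall>i s. s \<noteq> 0 \<longrightarrow> \<rho> (Hg i s) *v v - hv i s *s v \<in> W))"

definition self_extension :: "complex \<Rightarrow> ('i \<Rightarrow> nat) \<Rightarrow> ('i, 'n::finite) rep \<Rightarrow> ('i \<Rightarrow> complex poly) \<Rightarrow> bool" where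
  "self_extension q d \<rho> \<pi> \<longleftrightarrow>
     (\<exists>U. subquot_is_V q d \<rho> \<pi> {0} U \<and> subquot_is_V q d \<rho> \<pi> U UNIV)"

definition trivial_self_extension :: "complex \<Rightarrow> ('i \<Rightarrow> nat) \<Rightarrow> ('i, 'n::finite) rep \<Rightarrow> ('i \<Rightarrow> complex poly) \<Rightarrow> bool" where
  "trivial_self_extension q d \<rho> \<pi> \<longleftrightarrow>
     (\<exists>U1 U2. subquot_is_V q d \<rho> \<pi> {0} U1 \<and> subquot_is_V q d \<rho> \<pi> {0} U2 \<and>
        U1 \<inter> U2 = {0} \<and> (\<forall>v. \<exists>x\<in>U1. \<exists>y\<in>U2. v = x + y))"

end

theory Submission
  imports Defs "HOL-Library.Function_Algebras"
begin

text \<open>Everything rests on one fact about a vector \<open>v\<close> that is a highest-\<open>\<ell>\<close>-weight vector of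
  weight \<open>\<mu>\<close> modulo a submodule \<open>W\<close>: the submodule generated by \<open>W\<close> and \<open>v\<close> is \<open>W\<close> plus the
  span of the vectors \<open>x\<^sup>-\<^sub>j\<^sub>1\<^sub>,\<^sub>r\<^sub>1 \<cdots> x\<^sup>-\<^sub>j\<^sub>k\<^sub>,\<^sub>r\<^sub>k v\<close>, and such a vector lies in the weight space of
  \<open>\<mu> - \<alpha>\<^sub>j\<^sub>1 - \<dots> - \<alpha>\<^sub>j\<^sub>k\<close> modulo \<open>W\<close>. As the Cartan matrix is positive definite and \<open>q\<close> is not a
  root of unity, the \<open>k\<^sub>i\<close> tell these weights apart from \<open>\<mu>\<close> when \<open>k > 0\<close>; hence modulo \<open>W\<close>
  the \<open>\<mu>\<close>-weight space of that submodule is spanned by \<open>v\<close>.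

  Applied to \<open>0 \<subset> U \<subset> V\<close> with both subquotients isomorphic to \<open>V(\<pi>)\<close>, this gives
  \<open>U\<^sub>w\<^sub>t\<^sub>\<pi> = \<complex>v\<^sub>1\<close> for a highest-\<open>\<ell>\<close>-weight vector \<open>v\<^sub>1\<close>, and \<open>V\<^sub>w\<^sub>t\<^sub>\<pi> = \<complex>v\<^sub>2 + U\<^sub>w\<^sub>t\<^sub>\<pi>\<close> where
  \<open>h\<^sub>i\<^sub>,\<^sub>s\<close> acts on \<open>v\<^sub>2\<close> by \<open>h\<^sub>i\<^sub>,\<^sub>s(\<pi>)\<close> modulo \<open>U\<close>. Consequently any submodule meeting \<open>U\<close>
  trivially consists, in weight \<open>wt \<pi>\<close>, of \<open>\<ell>\<close>-weight vectors. A highest-\<open>\<ell>\<close>-weight vector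
  outside \<open>U\<close> therefore generates a complement of \<open>U\<close>, so the extension splits; a
  weight vector that is not an \<open>\<ell>\<close>-weight vector lies outside \<open>U\<close>, and every submodule
  containing it meets \<open>U\<close>, hence contains \<open>U\<close>, hence is everything. Conversely a split
  extension has two independent highest-\<open>\<ell>\<close>-weight vectors.\<close>

lemma cscale_mult_vec: "cscale c M *v x = c *s (M *v x)"
  by (simp add: cscale_def matrix_vector_mult_def vec_eq_iff sum_distrib_left mult.assoc)

lemma csubspace_zero: "csubspace S \<Longrightarrow> 0 \<in> S"
  by (simp add: csubspace_def)

lemma csubspace_add: "csubspace S \<Longrightarrow> x \<in> S \<Longrightarrow> y \<in> S \<Longrightarrow> x + y \<in> S"
  by (simp add: csubspace_def)

lemma csubspace_scale: "csubspace S \<Longrightarrow> x \<in> S \<Longrightarrow> c *s x \<in> S"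
  by (simp add: csubspace_def)

lemma csubspace_diff: "csubspace S \<Longrightarrow> x \<in> S \<Longrightarrow> y \<in> S \<Longrightarrow> x - y \<in> S"
  using csubspace_add[of S x "(-1) *s y"] csubspace_scale[of S y "-1"] by simp

lemma csubspace_scale_iff: "csubspace S \<Longrightarrow> c \<noteq> 0 \<Longrightarrow> c *s x \<in> S \<longleftrightarrow> x \<in> S"
  using csubspace_scale[of S "c *s x" "inverse c"] csubspace_scale[of S x c]
  by (auto simp: vector_smult_assoc)

lemma csubspace_sum_list: "csubspace S \<Longrightarrow> \<forall>x\<in>set xs. x \<in> S \<Longrightarrow> sum_list xs \<in> S"
  by (induction xs) (auto simp: csubspace_zero csubspace_add)

definition mat_preserves :: "complex^'n^'n \<Rightarrow> (complex^'n) set \<Rightarrow> bool" where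
  "mat_preserves M S \<longleftrightarrow> (\<forall>x\<in>S. M *v x \<in> S)"

lemma mat_preserves_mult: "mat_preserves A S \<Longrightarrow> mat_preserves B S \<Longrightarrow> mat_preserves (A ** B) S"
  by (simp add: mat_preserves_def matrix_vector_mul_assoc[symmetric])

lemma mat_preserves_diff:
  "csubspace S \<Longrightarrow> mat_preserves A S \<Longrightarrow> mat_preserves B S \<Longrightarrow> mat_preserves (A - B) S"
  by (simp add: mat_preserves_def matrix_vector_mult_diff_rdistrib csubspace_diff)

lemma mat_preserves_cscale: "csubspace S \<Longrightarrow> mat_preserves A S \<Longrightarrow> mat_preserves (cscale c A) S"
  by (simp add: mat_preserves_def cscale_mult_vec csubspace_scale)

lemma mat_preserves_zero: "csubspace S \<Longrightarrow> mat_preserves 0 S"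
  by (simp add: mat_preserves_def csubspace_zero)

lemma mat_preserves_sum:
  "csubspace S \<Longrightarrow> \<forall>x\<in>A. mat_preserves (f x) S \<Longrightarrow> mat_preserves (sum f A) S"
  by (induction A rule: infinite_finite_induct)
    (auto simp: mat_preserves_def matrix_vector_mult_add_rdistrib csubspace_add csubspace_zero)

lemma mat_preserves_mprod: "\<forall>A\<in>set ms. mat_preserves A S \<Longrightarrow> mat_preserves (mprod ms) S"
  by (induction ms) (auto simp: mprod_def mat_preserves_def matrix_vector_mul_assoc[symmetric])

lemma mat_preserves_exp_coeff:
  assumes "csubspace S" and "\<And>s. 0 < s \<Longrightarrow> mat_preserves (Hs s) S"
  shows "mat_preserves (exp_coeff Hs r) S"
  unfolding exp_coeff_def using assms
  by (auto simp: compositions_def intro!: mat_preserves_sum mat_preserves_cscale mat_preserves_mprod)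

lemma valid_gen_simps [simp]:
  "valid_gen (Kg i)" "valid_gen (Kinv i)" "valid_gen (Xp i r)" "valid_gen (Xm i r)"
  "s \<noteq> 0 \<Longrightarrow> valid_gen (Hg i s)"
  by (auto simp: valid_gen_def)

lemma submodule_csubspace: "submodule \<rho> W \<Longrightarrow> csubspace W"
  by (simp add: submodule_def)

lemma submodule_closed: "submodule \<rho> W \<Longrightarrow> valid_gen g \<Longrightarrow> w \<in> W \<Longrightarrow> \<rho> g *v w \<in> W"
  by (simp add: submodule_def)

lemma submodule_zero: "submodule \<rho> {0}"
  by (simp add: submodule_def csubspace_def)

lemma submodule_Int: "submodule \<rho> A \<Longrightarrow> submodule \<rho> B \<Longrightarrow> submodule \<rho> (A \<inter> B)"
  by (simp add: submodule_def csubspace_def)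

definition submodule_sum :: "(complex^'n) set \<Rightarrow> (complex^'n) set \<Rightarrow> (complex^'n) set" where
  "submodule_sum A B = {x + y | x y. x \<in> A \<and> y \<in> B}"

lemma submodule_submodule_sum:
  assumes A: "submodule \<rho> A" and B: "submodule \<rho> B" shows "submodule \<rho> (submodule_sum A B)"
proof -
  have closed: "f x + f y \<in> submodule_sum A B"
    if "x \<in> A" "y \<in> B" "\<And>x. x \<in> A \<Longrightarrow> f x \<in> A" "\<And>y. y \<in> B \<Longrightarrow> f y \<in> B" for f x y
    using that unfolding submodule_sum_def by blast
  have "0 + 0 \<in> submodule_sum A B"
    using closed[of 0 0 id] A B by (simp add: submodule_csubspace csubspace_zero)
  moreover have "(x1 + y1) + (x2 + y2) \<in> submodule_sum A B"
    if "x1 \<in> A" "x2 \<in> A" "y1 \<in> B" "y2 \<in> B" for x1 x2 y1 y2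
    using closed[of "x1 + x2" "y1 + y2" id] that A B
    by (simp add: submodule_csubspace csubspace_add algebra_simps)
  moreover have "c *s x + c *s y \<in> submodule_sum A B" if "x \<in> A" "y \<in> B" for c x y
    using closed[of x y "(*s) c"] that A B by (simp add: submodule_csubspace csubspace_scale)
  moreover have "M *v x + M *v y \<in> submodule_sum A B"
    if "x \<in> A" "y \<in> B" "\<forall>a\<in>A. M *v a \<in> A" "\<forall>b\<in>B. M *v b \<in> B" for M x y
    using closed[of x y "(*v) M"] that by simp
  ultimately show ?thesis using A B
    unfolding submodule_def csubspace_def submodule_sum_def
    by (auto simp: vector_add_ldistrib matrix_vector_right_distrib)
qed

lemma submodule_sum_upper1: "submodule \<rho> B \<Longrightarrow> A \<subseteq> submodule_sum A B"
  unfolding submodule_sum_def by (force dest: submodule_csubspace csubspace_zero)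

lemma submodule_sum_upper2: "submodule \<rho> A \<Longrightarrow> B \<subseteq> submodule_sum A B"
  unfolding submodule_sum_def by (force dest: submodule_csubspace csubspace_zero)

text \<open>Coordinates of the simple root \<open>\<alpha>\<^sub>j\<close> in the basis of simple roots.\<close>
definition simple_root :: "'i \<Rightarrow> 'i \<Rightarrow> int" where
  "simple_root j = (\<lambda>k. if k = j then 1 else 0)"

locale qloop_module =
  fixes a :: "'i::finite \<Rightarrow> 'i \<Rightarrow> int" and d :: "'i \<Rightarrow> nat" and q :: complex
    and \<rho> :: "('i, 'n::finite) rep"
  assumes rep: "qloop_rep a d q \<rho>" and q_nonzero: "q \<noteq> 0"
    and q_not_root_of_unity: "\<forall>n::nat. 0 < n \<longrightarrow> q ^ n \<noteq> 1"
    and cartan: "finite_type_cartan a d"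
begin

abbreviation "K i \<equiv> \<rho> (Kg i)"
abbreviation "Ki i \<equiv> \<rho> (Kinv i)"
abbreviation "H i s \<equiv> \<rho> (Hg i s)"
abbreviation "XP i r \<equiv> \<rho> (Xp i r)"
abbreviation "XM i r \<equiv> \<rho> (Xm i r)"
abbreviation "Q i \<equiv> qi q d i"
abbreviation "Psi i m \<equiv> cscale (inverse (Q i - inverse (Q i))) (psi_plus q d \<rho> i m - psi_minus q d \<rho> i m)"

lemma Q_nonzero: "Q i \<noteq> 0"
  using q_nonzero by (simp add: qi_def)

lemma K_Kinv: "K i *v (Ki i *v x) = x" "Ki i *v (K i *v x) = x"
  using rep by (auto simp: qloop_rep_def matrix_vector_mul_assoc)

lemma K_commute: "K i *v (K j *v x) = K j *v (K i *v x)"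
  using rep by (auto simp: qloop_rep_def matrix_vector_mul_assoc)

lemma K_XM: "K i *v (XM j r *v x) = (Q i powi (- a i j)) *s (XM j r *v (K i *v x))"
proof -
  have conj: "K i ** XM j r ** Ki i = cscale (Q i powi (- a i j)) (XM j r)"
    using rep by (simp add: qloop_rep_def)
  have "K i *v (XM j r *v x) = (K i ** XM j r ** Ki i) *v (K i *v x)"
    by (simp add: matrix_vector_mul_assoc[symmetric] K_Kinv)
  then show ?thesis by (simp add: conj cscale_mult_vec)
qed

lemma Kinv_XM: "Ki i *v (XM j r *v x) = (Q i powi (a i j)) *s (XM j r *v (Ki i *v x))"
proof -
  have "XM j r *v (Ki i *v x) = (Q i powi (- a i j)) *s (Ki i *v (XM j r *v x))"
    using arg_cong[OF K_XM[of i j r "Ki i *v x"], of "(*v) (Ki i)"]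
    by (simp add: K_Kinv vector_scalar_commute)
  then show ?thesis
    using Q_nonzero by (simp add: vector_smult_assoc power_int_minus)
qed

lemma H_XM: "s \<noteq> 0 \<Longrightarrow> H i s *v (XM j r *v x) =
    XM j r *v (H i s *v x) - (qnum (Q i) (s * a i j) / of_int s) *s (XM j (r + s) *v x)"
  using rep arg_cong[of _ _ "\<lambda>M. M *v x"]
  by (simp add: qloop_rep_def matrix_vector_mult_diff_rdistrib matrix_vector_mul_assoc
      cscale_mult_vec vector_smult_lneg algebra_simps)

lemma XP_XM: "XP i r *v (XM j s *v x) = XM j s *v (XP i r *v x) + (if i = j then Psi i (r + s) else 0) *v x"
proof -
  have "XP i r ** XM j s - XM j s ** XP i r = (if i = j then Psi i (r + s) else 0)"
    using rep by (simp add: qloop_rep_def)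
  from arg_cong[OF this, of "\<lambda>M. M *v x"] show ?thesis
    by (simp add: matrix_vector_mult_diff_rdistrib matrix_vector_mul_assoc algebra_simps)
qed

end

section \<open>Weights modulo a submodule\<close>

context qloop_module
begin

lemma cartan_nondegenerate:
  assumes "(n::'i \<Rightarrow> int) \<noteq> 0" shows "\<exists>i. (\<Sum>j\<in>UNIV. a i j * n j) \<noteq> 0"
proof (rule ccontr)
  assume "\<not> ?thesis"
  then have kernel: "\<And>i. (\<Sum>j\<in>UNIV. a i j * n j) = 0" by auto
  define x where "x = (\<lambda>i. real_of_int (n i))"
  have "x \<noteq> (\<lambda>_. 0)" using assms by (auto simp: x_def fun_eq_iff)
  then have "(\<Sum>i\<in>UNIV. \<Sum>j\<in>UNIV. x i * real (d i) * of_int (a i j) * x j) > 0"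
    using cartan by (simp add: finite_type_cartan_def)
  moreover have "(\<Sum>j\<in>UNIV. x i * real (d i) * of_int (a i j) * x j) =
      x i * real (d i) * of_int (\<Sum>j\<in>UNIV. a i j * n j)" for i
    by (simp add: x_def sum_distrib_left mult.assoc)
  ultimately show False by (simp add: kernel)
qed

lemma Q_powi_ne_1: assumes "(m::int) \<noteq> 0" shows "Q i powi m \<noteq> 1"
proof
  assume "Q i powi m = 1"
  then have "Q i ^ nat \<bar>m\<bar> = 1"
    using assms by (cases "m > 0") (auto simp: power_int_def power_inverse split: if_splits)
  then have "q ^ (d i * nat \<bar>m\<bar>) = 1" by (simp add: qi_def power_mult)
  moreover have "0 < d i * nat \<bar>m\<bar>" using cartan assms by (simp add: finite_type_cartan_def)
  ultimately show False using q_not_root_of_unity by blast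
qed

text \<open>The weight \<open>\<Sum>\<^sub>j n\<^sub>j \<alpha>\<^sub>j\<close> in coordinates w.r.t. the fundamental weights.\<close>
definition root_weight :: "('i \<Rightarrow> int) \<Rightarrow> 'i \<Rightarrow> int" where
  "root_weight n i = (\<Sum>j\<in>UNIV. a i j * n j)"

lemma root_weight_zero [simp]: "root_weight 0 i = 0"
  by (simp add: root_weight_def)

lemma root_weight_add_simple_root: "root_weight (n + simple_root j) i = root_weight n i + a i j"
proof -
  have "(\<Sum>k\<in>UNIV. a i k * simple_root j k) = (\<Sum>k\<in>UNIV. if k = j then a i k else 0)"
    by (rule sum.cong) (auto simp: simple_root_def)
  then show ?thesis by (simp add: root_weight_def distrib_left sum.distrib)
qed

lemma K_eigenvalue_shift_ne:
  assumes "n \<noteq> 0" shows "\<exists>i. Q i powi (\<mu> i - root_weight n i) \<noteq> Q i powi \<mu> i"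
proof -
  obtain i where "root_weight n i \<noteq> 0"
    using cartan_nondegenerate[OF assms] by (auto simp: root_weight_def)
  then have "Q i powi (- root_weight n i) \<noteq> 1" by (simp add: Q_powi_ne_1)
  then have "Q i powi \<mu> i * Q i powi (- root_weight n i) \<noteq> Q i powi \<mu> i"
    using Q_nonzero by simp
  then show ?thesis using Q_nonzero by (auto simp: power_int_add[symmetric])
qed

definition weight_mod :: "(complex^'n) set \<Rightarrow> ('i \<Rightarrow> int) \<Rightarrow> complex^'n \<Rightarrow> bool" where
  "weight_mod W \<mu> z \<longleftrightarrow> (\<forall>i. K i *v z - (Q i powi \<mu> i) *s z \<in> W)"

lemma weight_space_iff_weight_mod: "z \<in> weight_space q d \<rho> \<mu> \<longleftrightarrow> weight_mod {0} \<mu> z"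
  by (simp add: weight_space_def weight_mod_def)

lemma weight_mod_zero_imp: "csubspace W \<Longrightarrow> weight_mod {0} \<mu> z \<Longrightarrow> weight_mod W \<mu> z"
  by (simp add: weight_mod_def csubspace_zero)

lemma weight_mod_diff:
  assumes "csubspace W" "weight_mod W \<mu> x" "weight_mod W \<mu> y" shows "weight_mod W \<mu> (x - y)"
proof -
  have eq: "K i *v (x - y) - (Q i powi \<mu> i) *s (x - y) =
      (K i *v x - (Q i powi \<mu> i) *s x) - (K i *v y - (Q i powi \<mu> i) *s y)" for i
    by (simp add: matrix_vector_mult_diff_distrib vec_eq_iff algebra_simps)
  show ?thesis
    using assms(2,3) csubspace_diff[OF assms(1)] unfolding weight_mod_def eq by blast
qed

lemma weight_mod_K_shift:
  assumes "submodule \<rho> W" "weight_mod W \<mu> z" shows "weight_mod W \<mu> (K i *v z - e *s z)"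
proof -
  have eq: "K k *v (K i *v z - e *s z) - (Q k powi \<mu> k) *s (K i *v z - e *s z) =
      K i *v (K k *v z - (Q k powi \<mu> k) *s z) - e *s (K k *v z - (Q k powi \<mu> k) *s z)" for k
    by (simp add: K_commute[of i k] matrix_vector_mult_diff_distrib vector_scalar_commute
        vec_eq_iff algebra_simps)
  have "K i *v y - e *s y \<in> W" if "y \<in> W" for y
    using assms(1) that
    by (simp add: csubspace_diff csubspace_scale submodule_closed submodule_csubspace)
  then show ?thesis using assms(2) unfolding weight_mod_def eq by blast
qed

lemma weight_mod_eigen_filter:
  assumes "csubspace W" "weight_mod W \<mu> z" "K i *v z - e *s z - c *s v \<in> W" "e \<noteq> Q i powi \<mu> i"
  shows "z - (c / (Q i powi \<mu> i - e)) *s v \<in> W"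
proof -
  let ?m = "Q i powi \<mu> i"
  have "(K i *v z - e *s z - c *s v) - (K i *v z - ?m *s z) \<in> W"
    using csubspace_diff[OF assms(1,3)] assms(2) unfolding weight_mod_def by blast
  also have "(K i *v z - e *s z - c *s v) - (K i *v z - ?m *s z) = (?m - e) *s (z - (c / (?m - e)) *s v)"
    using assms(4) by (simp add: vec_eq_iff field_simps)
  finally have "(?m - e) *s (z - (c / (?m - e)) *s v) \<in> W" .
  moreover have "?m - e \<noteq> 0" using assms(4) by simp
  ultimately show ?thesis using csubspace_scale_iff[OF assms(1)] by blast
qed

section \<open>Vectors of highest weight modulo a submodule\<close>

definition hw_mod :: "(complex^'n) set \<Rightarrow> complex^'n \<Rightarrow> ('i \<Rightarrow> int) \<Rightarrow> ('i \<Rightarrow> int \<Rightarrow> complex) \<Rightarrow> bool" where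
  "hw_mod W v \<mu> hv \<longleftrightarrow> submodule \<rho> W \<and> weight_mod W \<mu> v \<and> (\<forall>i r. XP i r *v v \<in> W) \<and>
     (\<forall>i s. s \<noteq> 0 \<longrightarrow> H i s *v v - hv i s *s v \<in> W)"

text \<open>\<open>descendant W v n x\<close>: modulo \<open>W\<close>, \<open>x\<close> is a combination of vectors
  \<open>x\<^sup>-\<^sub>j\<^sub>1\<^sub>,\<^sub>r\<^sub>1 \<cdots> x\<^sup>-\<^sub>j\<^sub>k\<^sub>,\<^sub>r\<^sub>k v\<close> with \<open>\<alpha>\<^sub>j\<^sub>1 + \<dots> + \<alpha>\<^sub>j\<^sub>k = \<Sum>\<^sub>j n\<^sub>j \<alpha>\<^sub>j\<close>.\<close>
inductive descendant :: "(complex^'n) set \<Rightarrow> complex^'n \<Rightarrow> ('i \<Rightarrow> int) \<Rightarrow> complex^'n \<Rightarrow> bool"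
  for W v where
  base: "w \<in> W \<Longrightarrow> descendant W v n w"
| gen: "descendant W v 0 v"
| add: "descendant W v n x \<Longrightarrow> descendant W v n y \<Longrightarrow> descendant W v n (x + y)"
| smul: "descendant W v n x \<Longrightarrow> descendant W v n (c *s x)"
| lower: "descendant W v n x \<Longrightarrow> descendant W v (n + simple_root j) (XM j r *v x)"

definition hw_span :: "(complex^'n) set \<Rightarrow> complex^'n \<Rightarrow> (complex^'n) set" where
  "hw_span W v = {sum_list (map fst xs) | xs. \<forall>p\<in>set xs. descendant W v (snd p) (fst p)}"

lemma hw_span_map:
  assumes "\<And>n x. descendant W v n x \<Longrightarrow> descendant W v (f n) (g x)"
    and "\<And>x y. g (x + y) = g x + g y" and "g 0 = 0" and "z \<in> hw_span W v"
  shows "g z \<in> hw_span W v"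
proof -
  obtain xs where xs: "\<forall>p\<in>set xs. descendant W v (snd p) (fst p)" "z = sum_list (map fst xs)"
    using assms(4) by (auto simp: hw_span_def)
  let ?ys = "map (\<lambda>p. (g (fst p), f (snd p))) xs"
  have "g (sum_list (map fst xs)) = sum_list (map fst ?ys)"
    by (induction xs) (simp_all add: assms(2,3))
  moreover have "\<forall>p\<in>set ?ys. descendant W v (snd p) (fst p)" using xs(1) assms(1) by auto
  ultimately show ?thesis unfolding hw_span_def xs(2) by blast
qed

lemma hw_span_mat:
  assumes "\<And>n x. descendant W v n x \<Longrightarrow> descendant W v (f n) (M *v x)" and "z \<in> hw_span W v"
  shows "M *v z \<in> hw_span W v"
  using hw_span_map[where g = "(*v) M", OF assms(1) _ _ assms(2)]
  by (simp add: matrix_vector_right_distrib)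

lemma hw_span_gen: "v \<in> hw_span W v"
  unfolding hw_span_def by (auto intro!: exI[of _ "[(v, 0)]"] descendant.gen)

lemma hw_span_base: "W \<subseteq> hw_span W v"
  unfolding hw_span_def by (auto intro!: exI[of _ "[(w, 0)]" for w] descendant.base)

lemma hw_span_least:
  assumes U: "submodule \<rho> U" "W \<subseteq> U" "v \<in> U" shows "hw_span W v \<subseteq> U"
proof -
  have "descendant W v n x \<Longrightarrow> x \<in> U" for n x
    by (induction rule: descendant.induct)
      (use U in \<open>auto simp: csubspace_add csubspace_scale submodule_csubspace submodule_closed\<close>)
  then show ?thesis
    using csubspace_sum_list[OF submodule_csubspace[OF U(1)], of "map fst xs" for xs]
    by (fastforce simp: hw_span_def)
qed


context
  fixes W v \<mu> hv assumes hw: "hw_mod W v \<mu> hv"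
begin

lemma submodule_W: "submodule \<rho> W"
  using hw by (simp add: hw_mod_def)

lemma csubspace_W: "csubspace W"
  using submodule_W by (rule submodule_csubspace)

lemma descendant_csubspace: "csubspace {x. descendant W v n x}"
  unfolding csubspace_def using csubspace_W by (auto intro: descendant.intros csubspace_zero)

lemma descendant_diff: "descendant W v n x \<Longrightarrow> descendant W v n y \<Longrightarrow> descendant W v n (x - y)"
  using csubspace_diff[OF descendant_csubspace] by auto

lemma descendant_closedI:
  assumes "\<rho> g *v v - c *s v \<in> W" and "valid_gen g"
    and "\<And>n x j r. descendant W v n x \<Longrightarrow> descendant W v n (\<rho> g *v x) \<Longrightarrow>
       descendant W v (n + simple_root j) (\<rho> g *v (XM j r *v x))"
    and "descendant W v n x"
  shows "descendant W v n (\<rho> g *v x)"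
  using assms(4)
proof (induction rule: descendant.induct)
  case (base w n)
  then show ?case using assms(2) by (intro descendant.base submodule_closed[OF submodule_W])
next
  case gen
  have "\<rho> g *v v = (\<rho> g *v v - c *s v) + c *s v" by simp
  with assms(1) show ?case by (metis descendant.base descendant.add descendant.gen descendant.smul)
next
  case (add n x y)
  then show ?case by (simp add: matrix_vector_right_distrib descendant.add)
next
  case (smul n x c)
  then show ?case by (simp add: vector_scalar_commute descendant.smul)
next
  case (lower n x j r)
  then show ?case by (rule assms(3))
qed

lemma descendant_K: "descendant W v n x \<Longrightarrow> descendant W v n (K i *v x)"
proof (rule descendant_closedI[of _ "Q i powi \<mu> i"])
  show "K i *v v - (Q i powi \<mu> i) *s v \<in> W" using hw by (simp add: hw_mod_def weight_mod_def)
qed (simp_all add: K_XM descendant.smul descendant.lower)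

lemma descendant_Ki: "descendant W v n x \<Longrightarrow> descendant W v n (Ki i *v x)"
proof (rule descendant_closedI[of _ "inverse (Q i powi \<mu> i)"])
  have "K i *v v - (Q i powi \<mu> i) *s v \<in> W" using hw by (simp add: hw_mod_def weight_mod_def)
  then have "Ki i *v (K i *v v - (Q i powi \<mu> i) *s v) \<in> W"
    using submodule_W by (simp add: submodule_closed)
  then have "v - (Q i powi \<mu> i) *s (Ki i *v v) \<in> W"
    by (simp add: K_Kinv matrix_vector_mult_diff_distrib vector_scalar_commute)
  then have "(- inverse (Q i powi \<mu> i)) *s (v - (Q i powi \<mu> i) *s (Ki i *v v)) \<in> W"
    by (rule csubspace_scale[OF csubspace_W])
  also have "(- inverse (Q i powi \<mu> i)) *s (v - (Q i powi \<mu> i) *s (Ki i *v v)) =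
      Ki i *v v - inverse (Q i powi \<mu> i) *s v"
    using Q_nonzero by (simp add: vec_eq_iff algebra_simps)
  finally show "Ki i *v v - inverse (Q i powi \<mu> i) *s v \<in> W" .
qed (simp_all add: Kinv_XM descendant.smul descendant.lower)

lemma descendant_H:
  assumes "s \<noteq> 0" shows "descendant W v n x \<Longrightarrow> descendant W v n (H i s *v x)"
proof (rule descendant_closedI[of _ "hv i s"])
  show "H i s *v v - hv i s *s v \<in> W" using hw assms by (simp add: hw_mod_def)
qed (simp_all add: assms H_XM descendant_diff descendant.smul descendant.lower)

lemma descendant_Psi: "descendant W v n x \<Longrightarrow> descendant W v n (Psi i m *v x)"
proof -
  let ?D = "{x. descendant W v n x}"
  have gens: "mat_preserves (K i) ?D" "mat_preserves (Ki i) ?D"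
    "\<And>c s. 0 < s \<Longrightarrow> mat_preserves (cscale c (H i (int s))) ?D"
    "\<And>c s. 0 < s \<Longrightarrow> mat_preserves (cscale c (H i (- int s))) ?D"
    by (auto simp: mat_preserves_def cscale_mult_vec descendant_K descendant_Ki
        intro!: descendant.smul descendant_H)
  have "mat_preserves (psi_plus q d \<rho> i m) ?D" "mat_preserves (psi_minus q d \<rho> i m) ?D"
    unfolding psi_plus_def psi_minus_def using gens descendant_csubspace
    by (auto intro!: mat_preserves_mult mat_preserves_exp_coeff mat_preserves_zero)
  then have "mat_preserves (Psi i m) ?D"
    by (intro mat_preserves_cscale mat_preserves_diff descendant_csubspace)
  then show "descendant W v n x \<Longrightarrow> descendant W v n (Psi i m *v x)"
    by (simp add: mat_preserves_def)
qed

lemma descendant_XP: "descendant W v n x \<Longrightarrow> descendant W v (n - simple_root i) (XP i r *v x)"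
proof (induction rule: descendant.induct)
  case (base w n)
  then show ?case by (intro descendant.base submodule_closed[OF submodule_W]) simp_all
next
  case gen
  then show ?case using hw by (simp add: hw_mod_def descendant.base)
next
  case (add n x y)
  then show ?case by (simp add: matrix_vector_right_distrib descendant.add)
next
  case (smul n x c)
  then show ?case by (simp add: vector_scalar_commute descendant.smul)
next
  case (lower n x j s)
  have "descendant W v (n + simple_root j - simple_root i) (XM j s *v (XP i r *v x))"
    unfolding diff_add_eq[symmetric] by (rule descendant.lower[OF lower.IH])
  moreover have "descendant W v (n + simple_root j - simple_root i) ((if i = j then Psi i (r + s) else 0) *v x)"
    using lower.hyps csubspace_W by (auto intro: descendant_Psi descendant.base csubspace_zero)
  ultimately show ?case unfolding XP_XM by (rule descendant.add)
qed

lemma submodule_hw_span: "submodule \<rho> (hw_span W v)"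
  unfolding submodule_def csubspace_def
proof (intro conjI allI impI ballI)
  show "0 \<in> hw_span W v" using hw_span_base csubspace_zero[OF csubspace_W] by blast
next
  fix x y assume "x \<in> hw_span W v" "y \<in> hw_span W v"
  then obtain xs ys where "\<forall>p\<in>set (xs @ ys). descendant W v (snd p) (fst p)"
    and "x + y = sum_list (map fst (xs @ ys))"
    by (auto simp: hw_span_def)
  then show "x + y \<in> hw_span W v" unfolding hw_span_def by blast
next
  fix c x assume "x \<in> hw_span W v"
  then show "c *s x \<in> hw_span W v"
    using hw_span_map[where f = "\<lambda>n. n" and g = "(*s) c"] by (simp add: descendant.smul vector_add_ldistrib)
next
  fix g :: "'i gen" and x assume g: "valid_gen g" and x: "x \<in> hw_span W v"
  show "\<rho> g *v x \<in> hw_span W v"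
  proof (cases g)
    case (Xp i r)
    then show ?thesis using hw_span_mat[OF descendant_XP x] by simp
  next
    case (Xm j r)
    then show ?thesis using hw_span_mat[OF descendant.lower x] by simp
  next
    case (Hg i s)
    with g have "s \<noteq> 0" by (auto simp: valid_gen_def)
    with Hg show ?thesis using hw_span_mat[OF descendant_H x] by simp
  next
    case (Kg i)
    then show ?thesis using hw_span_mat[OF descendant_K x] by simp
  next
    case (Kinv i)
    then show ?thesis using hw_span_mat[OF descendant_Ki x] by simp
  qed
qed

lemma descendant_weight_mod:
  "descendant W v n x \<Longrightarrow> weight_mod W (\<lambda>i. \<mu> i - root_weight n i) x"
proof (induction rule: descendant.induct)
  case (base w n)
  then show ?case using csubspace_W submodule_W
    by (simp add: weight_mod_def csubspace_diff csubspace_scale submodule_closed)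
next
  case gen
  then show ?case using hw by (simp add: hw_mod_def root_weight_def)
next
  case (add n x y)
  then show ?case using csubspace_W
    by (simp add: weight_mod_def matrix_vector_right_distrib vector_add_ldistrib csubspace_add
        add_diff_add)
next
  case (smul n x c)
  have eq: "K i *v (c *s x) - e *s (c *s x) = c *s (K i *v x - e *s x)" for i e
    by (simp add: vector_scalar_commute vec_eq_iff algebra_simps)
  show ?case
    using smul.IH csubspace_scale[OF csubspace_W] unfolding weight_mod_def eq by blast
next
  case (lower n x j r)
  let ?e = "\<lambda>i. Q i powi (\<mu> i - root_weight n i)"
  have shift: "Q i powi (\<mu> i - root_weight (n + simple_root j) i) = Q i powi (- a i j) * ?e i" for i
    using Q_nonzero by (simp add: root_weight_add_simple_root power_int_add[symmetric] algebra_simps)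
  have eq: "K i *v (XM j r *v x) - (Q i powi (- a i j) * ?e i) *s (XM j r *v x) =
      Q i powi (- a i j) *s (XM j r *v (K i *v x - ?e i *s x))" for i
    by (simp add: K_XM matrix_vector_mult_diff_distrib vector_scalar_commute vec_eq_iff algebra_simps)
  have "XM j r *v (K i *v x - ?e i *s x) \<in> W" for i
    using lower.IH submodule_W by (simp add: weight_mod_def submodule_closed)
  then show ?case
    using csubspace_scale[OF csubspace_W] unfolding weight_mod_def shift eq by blast
qed

lemma descendant_nonneg: "descendant W v n x \<Longrightarrow> (\<forall>i. 0 \<le> n i) \<or> x \<in> W"
proof (induction rule: descendant.induct)
  case (add n x y)
  then show ?case using csubspace_W by (auto intro: csubspace_add)
next
  case (smul n x c)
  then show ?case using csubspace_W by (auto intro: csubspace_scale)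
next
  case (lower n x j r)
  then show ?case using submodule_W by (auto simp: simple_root_def submodule_closed)
qed auto

lemma descendant_zero_shift: "descendant W v 0 x \<Longrightarrow> \<exists>c. x - c *s v \<in> W"
proof (induction "0 :: 'i \<Rightarrow> int" x rule: descendant.induct)
  case (base w)
  then show ?case by (intro exI[of _ 0]) simp
next
  case gen
  then show ?case using csubspace_W by (intro exI[of _ 1]) (simp add: csubspace_zero)
next
  case (add x y)
  then obtain c1 c2 where "(x - c1 *s v) + (y - c2 *s v) \<in> W"
    using csubspace_add[OF csubspace_W] by blast
  then show ?case by (intro exI[of _ "c1 + c2"]) (simp add: vector_sadd_rdistrib algebra_simps)
next
  case (smul x c)
  then obtain c1 where "c *s (x - c1 *s v) \<in> W" using csubspace_scale[OF csubspace_W] by blast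
  then show ?case by (intro exI[of _ "c * c1"]) (simp add: vector_ssub_ldistrib vector_smult_assoc)
next
  case (lower n x j r)
  then have "n j = -1" by (simp add: fun_eq_iff simple_root_def) (metis add.commute add_eq_0_iff)
  then have "\<not> (\<forall>i. 0 \<le> n i)" by (metis neg_0_le_iff_le not_one_le_zero)
  then have "x \<in> W" using descendant_nonneg[OF lower.hyps(1)] by blast
  then show ?case using submodule_W by (intro exI[of _ 0]) (simp add: submodule_closed)
qed

text \<open>Induction on the number of summands: a summand of shift \<open>0\<close> is a multiple of \<open>v\<close>
  modulo \<open>W\<close>; a summand of shift \<open>n \<noteq> 0\<close> is killed modulo \<open>W\<close> by \<open>k\<^sub>i - e\<close> for a suitable
  eigenvalue \<open>e \<noteq> q\<^sub>i\<^sup>\<mu>\<^sup>\<^sub>i\<close>, while \<open>k\<^sub>i - e\<close> acts on \<open>z\<close> as the nonzero scalar \<open>q\<^sub>i\<^sup>\<mu>\<^sup>\<^sub>i - e\<close>.\<close>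
lemma descendants_sum_weight_mod:
  assumes "\<forall>p\<in>set xs. descendant W v (snd p) (fst p)" and "weight_mod W \<mu> z"
    and "z - sum_list (map fst xs) \<in> W"
  shows "\<exists>c. z - c *s v \<in> W"
  using assms
proof (induction xs arbitrary: z rule: length_induct)
  case (1 xs)
  show ?case
  proof (cases xs)
    case Nil
    with "1.prems" show ?thesis by (intro exI[of _ 0]) simp
  next
    case (Cons p ys)
    obtain x n where p: "p = (x, n)" by fastforce
    have x: "descendant W v n x" and ys: "\<forall>p\<in>set ys. descendant W v (snd p) (fst p)"
      using "1.prems"(1) Cons p by auto
    have rest: "z - x - sum_list (map fst ys) \<in> W"
      using "1.prems"(3) Cons p by (simp add: algebra_simps)
    have IH: "\<exists>c. y - c *s v \<in> W"
      if "length zs = length ys" "\<forall>p\<in>set zs. descendant W v (snd p) (fst p)"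
        "weight_mod W \<mu> y" "y - sum_list (map fst zs) \<in> W" for zs y
      using "1.IH" Cons that by (metis length_Cons lessI)
    show ?thesis
    proof (cases "n = 0")
      case True
      obtain c0 where c0: "x - c0 *s v \<in> W" using descendant_zero_shift x True by blast
      have "weight_mod W \<mu> x" using descendant_weight_mod[OF x] True by simp
      then have "weight_mod W \<mu> (z - x)" using "1.prems"(2) csubspace_W by (simp add: weight_mod_diff)
      then obtain c where "z - x - c *s v \<in> W" using IH ys rest by blast
      then have "(z - x - c *s v) + (x - c0 *s v) \<in> W" using c0 csubspace_add[OF csubspace_W] by blast
      then show ?thesis by (intro exI[of _ "c + c0"]) (simp add: vector_sadd_rdistrib algebra_simps)
    next
      case False
      then obtain i where ne: "Q i powi (\<mu> i - root_weight n i) \<noteq> Q i powi \<mu> i"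
        using K_eigenvalue_shift_ne by blast
      define e where "e = Q i powi (\<mu> i - root_weight n i)"
      define T where "T y = K i *v y - e *s y" for y
      have T_W: "T y \<in> W" if "y \<in> W" for y
        using that csubspace_W submodule_W
        by (simp add: T_def csubspace_diff csubspace_scale submodule_closed)
      have T_sum: "T (sum_list (map fst zs)) = sum_list (map fst (map (\<lambda>p. (T (fst p), snd p)) zs))" for zs
        by (induction zs) (auto simp: T_def matrix_vector_right_distrib vec_eq_iff algebra_simps)
      have "T x \<in> W" using descendant_weight_mod[OF x] by (simp add: T_def e_def weight_mod_def)
      with T_W[OF rest] have "T (z - x - sum_list (map fst ys)) + T x \<in> W"
        by (rule csubspace_add[OF csubspace_W])
      moreover have T_diff: "T (y - y') = T y - T y'" for y y'
        by (simp add: T_def matrix_vector_mult_diff_distrib vec_eq_iff algebra_simps)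
      ultimately have "T z - T (sum_list (map fst ys)) \<in> W" by (simp add: T_diff)
      then have "T z - sum_list (map fst (map (\<lambda>p. (T (fst p), snd p)) ys)) \<in> W"
        by (simp only: T_sum)
      moreover have "descendant W v m (T y)" if "descendant W v m y" for m y
        unfolding T_def using that by (intro descendant_diff descendant_K descendant.smul)
      then have "\<forall>p\<in>set (map (\<lambda>p. (T (fst p), snd p)) ys). descendant W v (snd p) (fst p)"
        using ys by auto
      moreover have "weight_mod W \<mu> (T z)"
        unfolding T_def by (rule weight_mod_K_shift[OF submodule_W "1.prems"(2)])
      ultimately obtain c where "T z - c *s v \<in> W"
        using IH[of "map (\<lambda>p. (T (fst p), snd p)) ys" "T z"] by auto
      then have "z - (c / (Q i powi \<mu> i - e)) *s v \<in> W"
        using weight_mod_eigen_filter[OF csubspace_W "1.prems"(2)] ne unfolding T_def e_def by blast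
      then show ?thesis by blast
    qed
  qed
qed

lemma hw_span_weight_mod: "z \<in> hw_span W v \<Longrightarrow> weight_mod W \<mu> z \<Longrightarrow> \<exists>c. z - c *s v \<in> W"
  using descendants_sum_weight_mod csubspace_zero[OF csubspace_W] by (auto simp: hw_span_def)

end

lemma hlw_vector_iff_hw_mod: "hlw_vector q d \<rho> \<mu> v \<longleftrightarrow> v \<noteq> 0 \<and> (\<exists>hv. hw_mod {0} v \<mu> hv)"
  by (auto simp: hlw_vector_def ell_weight_vector_def hw_mod_def weight_space_iff_weight_mod
      submodule_zero)

lemma hw_mod_zero_eigen: "hw_mod {0} v \<mu> hv \<Longrightarrow> s \<noteq> 0 \<Longrightarrow> H i s *v v = hv i s *s v"
  by (simp add: hw_mod_def)

lemma subquot_is_V_iff: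
  "subquot_is_V q d \<rho> \<pi> W U \<longleftrightarrow> submodule \<rho> W \<and> submodule \<rho> U \<and> W \<subset> U \<and>
     (\<forall>U'. submodule \<rho> U' \<and> W \<subseteq> U' \<and> U' \<subseteq> U \<longrightarrow> U' = W \<or> U' = U) \<and>
     (\<exists>v\<in>U - W. \<exists>hv. ell_weight_of q d \<pi> hv \<and> hw_mod W v (wt \<pi>) hv)"
proof -
  have "(\<exists>v\<in>U - W. \<exists>hv. ell_weight_of q d \<pi> hv \<and> weight_mod W (wt \<pi>) v \<and>
      (\<forall>i r. XP i r *v v \<in> W) \<and> (\<forall>i s. s \<noteq> 0 \<longrightarrow> H i s *v v - hv i s *s v \<in> W)) \<longleftrightarrow>
      (\<exists>v\<in>U - W. \<exists>hv. ell_weight_of q d \<pi> hv \<and> hw_mod W v (wt \<pi>) hv)" if "submodule \<rho> W"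
    using that by (simp add: hw_mod_def)
  then show ?thesis unfolding subquot_is_V_def weight_mod_def by (intro conj_cong refl) simp_all
qed

lemma unique_hlw_imp_nontrivial:
  assumes "\<forall>w. hlw_vector q d \<rho> (wt \<pi>) w \<longrightarrow> (\<exists>c. w = c *s v)"
  shows "\<not> trivial_self_extension q d \<rho> \<pi>"
proof
  assume "trivial_self_extension q d \<rho> \<pi>"
  then obtain U1 U2 where sq: "subquot_is_V q d \<rho> \<pi> {0} U1" "subquot_is_V q d \<rho> \<pi> {0} U2"
    and disjoint: "U1 \<inter> U2 = {0}" unfolding trivial_self_extension_def by blast
  obtain u1 u2 where u: "u1 \<in> U1" "hlw_vector q d \<rho> (wt \<pi>) u1" "u2 \<in> U2" "hlw_vector q d \<rho> (wt \<pi>) u2"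
    using sq by (auto simp: subquot_is_V_iff hlw_vector_iff_hw_mod)
  obtain c1 c2 where "u1 = c1 *s v" "u2 = c2 *s v" using assms u by blast
  moreover have "u1 \<noteq> 0" "u2 \<noteq> 0" using u by (simp_all add: hlw_vector_iff_hw_mod)
  ultimately have "u2 = (c2 / c1) *s u1" by (auto simp: vector_smult_assoc)
  moreover have "submodule \<rho> U1" using sq(1) by (simp add: subquot_is_V_iff)
  ultimately have "u2 \<in> U1" using u(1) by (simp add: csubspace_scale submodule_csubspace)
  with u(3,4) disjoint show False by (auto simp: hlw_vector_iff_hw_mod)
qed

end

section \<open>Self-extensions\<close>

locale self_extension_data = qloop_module a d q \<rho>
  for a :: "'i::finite \<Rightarrow> 'i \<Rightarrow> int" and d q and \<rho> :: "('i, 'n::finite) rep" +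
  fixes \<pi> :: "'i \<Rightarrow> complex poly" and U :: "(complex^'n) set"
    and v1 :: "complex^'n" and hv1 :: "'i \<Rightarrow> int \<Rightarrow> complex"
    and v2 :: "complex^'n" and hv2 :: "'i \<Rightarrow> int \<Rightarrow> complex"
  assumes submodule_U: "submodule \<rho> U"
    and U_simple: "\<And>U'. submodule \<rho> U' \<Longrightarrow> U' \<subseteq> U \<Longrightarrow> U' = {0} \<or> U' = U"
    and quotient_simple: "\<And>U'. submodule \<rho> U' \<Longrightarrow> U \<subseteq> U' \<Longrightarrow> U' = U \<or> U' = UNIV"
    and v1: "v1 \<in> U" "v1 \<noteq> 0" "ell_weight_of q d \<pi> hv1" "hw_mod {0} v1 (wt \<pi>) hv1"
    and v2: "v2 \<notin> U" "ell_weight_of q d \<pi> hv2" "hw_mod U v2 (wt \<pi>) hv2"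

context qloop_module
begin

lemma obtain_self_extension_data:
  assumes "self_extension q d \<rho> \<pi>"
  obtains U v1 hv1 v2 hv2 where "self_extension_data a d q \<rho> \<pi> U v1 hv1 v2 hv2"
proof -
  obtain U where sq1: "subquot_is_V q d \<rho> \<pi> {0} U" and sq2: "subquot_is_V q d \<rho> \<pi> U UNIV"
    using assms by (auto simp: self_extension_def)
  obtain v1 hv1 where "v1 \<in> U - {0}" "ell_weight_of q d \<pi> hv1" "hw_mod {0} v1 (wt \<pi>) hv1"
    using sq1 by (auto simp: subquot_is_V_iff)
  moreover obtain v2 hv2 where "v2 \<notin> U" "ell_weight_of q d \<pi> hv2" "hw_mod U v2 (wt \<pi>) hv2"
    using sq2 by (auto simp: subquot_is_V_iff)
  moreover have "submodule \<rho> U" using sq1 by (simp add: subquot_is_V_iff)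
  moreover have "U' = {0} \<or> U' = U" if "submodule \<rho> U'" "U' \<subseteq> U" for U'
    using sq1 that csubspace_zero[OF submodule_csubspace[OF that(1)]] by (simp add: subquot_is_V_iff)
  moreover have "U' = U \<or> U' = UNIV" if "submodule \<rho> U'" "U \<subseteq> U'" for U'
    using sq2 that by (simp add: subquot_is_V_iff)
  ultimately have "self_extension_data a d q \<rho> \<pi> U v1 hv1 v2 hv2"
    by (intro self_extension_data.intro qloop_module_axioms self_extension_data_axioms.intro) auto
  then show ?thesis by (rule that)
qed

end

context self_extension_data
begin

lemma csubspace_U: "csubspace U"
  using submodule_U by (rule submodule_csubspace)

lemma hlw_v1: "hlw_vector q d \<rho> (wt \<pi>) v1"
  using v1 by (auto simp: hlw_vector_iff_hw_mod)

lemma hw_span_v1: "hw_span {0} v1 = U"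
proof -
  have "hw_span {0} v1 \<subseteq> U"
    using v1(1) submodule_U by (intro hw_span_least) (auto dest: submodule_csubspace csubspace_zero)
  moreover have "hw_span {0} v1 \<noteq> {0}" using hw_span_gen[of v1 "{0}"] v1(2) by auto
  ultimately show ?thesis using U_simple[OF submodule_hw_span[OF v1(4)]] by blast
qed

lemma weight_vector_in_U:
  assumes "z \<in> U" "z \<in> weight_space q d \<rho> (wt \<pi>)" shows "\<exists>c. z = c *s v1"
  using hw_span_weight_mod[OF v1(4)] assms hw_span_v1 by (auto simp: weight_space_iff_weight_mod)

lemma weight_vector_mod_U:
  assumes "z \<in> weight_space q d \<rho> (wt \<pi>)" shows "\<exists>c. z - c *s v2 \<in> U"
proof -
  have "hw_span U v2 = UNIV"
    using quotient_simple[OF submodule_hw_span[OF v2(3)] hw_span_base] hw_span_gen v2(1) by blast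
  then show ?thesis
    using hw_span_weight_mod[OF v2(3)] assms submodule_U
    by (simp add: weight_space_iff_weight_mod weight_mod_zero_imp submodule_csubspace)
qed

lemma H_mod_U:
  assumes "s \<noteq> 0" and "z - c *s v2 \<in> U" shows "H i s *v z - hv2 i s *s z \<in> U"
proof -
  have "H i s *v (z - c *s v2) \<in> U" using submodule_closed[OF submodule_U _ assms(2)] assms(1) by simp
  then have "H i s *v (z - c *s v2) - hv2 i s *s (z - c *s v2) \<in> U"
    using csubspace_scale[OF csubspace_U assms(2)] by (rule csubspace_diff[OF csubspace_U])
  moreover have "c *s (H i s *v v2 - hv2 i s *s v2) \<in> U"
    using v2(3) assms(1) by (intro csubspace_scale[OF csubspace_U]) (simp add: hw_mod_def)
  ultimately have "(H i s *v (z - c *s v2) - hv2 i s *s (z - c *s v2)) + c *s (H i s *v v2 - hv2 i s *s v2) \<in> U"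
    by (rule csubspace_add[OF csubspace_U])
  also have "(H i s *v (z - c *s v2) - hv2 i s *s (z - c *s v2)) + c *s (H i s *v v2 - hv2 i s *s v2) =
      H i s *v z - hv2 i s *s z"
    by (simp add: matrix_vector_mult_diff_distrib vector_scalar_commute vec_eq_iff algebra_simps)
  finally show ?thesis .
qed

lemma weight_vector_of_complement_eigen:
  assumes "submodule \<rho> M" "U \<inter> M = {0}" "z \<in> M" "z \<in> weight_space q d \<rho> (wt \<pi>)" "s \<noteq> 0"
  shows "H i s *v z = hv2 i s *s z"
proof -
  obtain c where "z - c *s v2 \<in> U" using weight_vector_mod_U[OF assms(4)] by blast
  then have "H i s *v z - hv2 i s *s z \<in> U" using H_mod_U assms(5) by blast
  moreover have "H i s *v z \<in> M" using submodule_closed[OF assms(1) _ assms(3)] assms(5) by simp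
  then have "H i s *v z - hv2 i s *s z \<in> M"
    using csubspace_diff[OF submodule_csubspace[OF assms(1)]]
      csubspace_scale[OF submodule_csubspace[OF assms(1)] assms(3)] by blast
  ultimately show ?thesis using assms(2) by (simp add: set_eq_iff) (metis eq_iff_diff_eq_0)
qed

lemma weight_vector_generates:
  assumes "v \<in> weight_space q d \<rho> (wt \<pi>)" "v \<noteq> 0" "\<not> ell_weight_vector \<rho> v"
  shows "generated_submodule \<rho> v = UNIV"
proof -
  have "v \<notin> U"
  proof
    assume "v \<in> U"
    then obtain c where "v = c *s v1" using weight_vector_in_U assms(1) by blast
    then have "H i s *v v = hv1 i s *s v" if "s \<noteq> 0" for i s
      using hw_mod_zero_eigen[OF v1(4) that]
      by (simp add: vector_scalar_commute vector_smult_assoc mult.commute)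
    with assms(2,3) show False by (auto simp: ell_weight_vector_def)
  qed
  have "M = UNIV" if M: "submodule \<rho> M" "v \<in> M" for M
  proof (cases "U \<inter> M = {0}")
    case True
    then have "ell_weight_vector \<rho> v"
      using weight_vector_of_complement_eigen[OF M(1) True M(2) assms(1)] assms(2)
      by (auto simp: ell_weight_vector_def)
    with assms(3) show ?thesis by blast
  next
    case False
    then have "U \<subseteq> M" using U_simple[OF submodule_Int[OF submodule_U M(1)]] by blast
    then show ?thesis using quotient_simple[OF M(1)] M(2) \<open>v \<notin> U\<close> by blast
  qed
  then show ?thesis by (auto simp: generated_submodule_def)
qed

lemma hw_span_outside_U_Int:
  assumes hw: "hw_mod {0} w (wt \<pi>) hw" and "w \<notin> U"
  shows "U \<inter> hw_span {0} w = {0}"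
proof -
  have "U \<inter> hw_span {0} w \<noteq> U"
  proof
    assume "U \<inter> hw_span {0} w = U"
    then have "v1 \<in> hw_span {0} w" using v1(1) by blast
    then obtain c where "v1 = c *s w"
      using hw_span_weight_mod[OF hw] v1(4) by (force simp: hw_mod_def)
    with v1(1,2) \<open>w \<notin> U\<close> show False
      using csubspace_scale[OF csubspace_U, of v1 "inverse c"] by (auto simp: vector_smult_assoc)
  qed
  then show ?thesis using U_simple[OF submodule_Int[OF submodule_U submodule_hw_span[OF hw]]] by blast
qed

lemma complement_simple:
  assumes S: "submodule \<rho> S" "U \<inter> S = {0}" and U': "submodule \<rho> U'" "U' \<subseteq> S"
  shows "U' = {0} \<or> U' = S"
proof (cases "submodule_sum U' U = U")
  case True
  then have "U' \<subseteq> U" using submodule_sum_upper1[OF submodule_U] by blast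
  then show ?thesis using S(2) U' csubspace_zero[OF submodule_csubspace[OF U'(1)]] by blast
next
  case False
  then have full: "submodule_sum U' U = UNIV"
    using quotient_simple[OF submodule_submodule_sum[OF U'(1) submodule_U]]
      submodule_sum_upper2[OF U'(1)] by blast
  have "S \<subseteq> U'"
  proof
    fix x assume "x \<in> S"
    obtain y z where yz: "y \<in> U'" "z \<in> U" "x = y + z"
      using full unfolding submodule_sum_def by blast
    then have "z \<in> U \<inter> S"
      using \<open>x \<in> S\<close> U'(2) csubspace_diff[OF submodule_csubspace[OF S(1)], of x y] by auto
    then show "x \<in> U'" using yz S(2) by auto
  qed
  then show ?thesis using U'(2) by blast
qed

lemma hlw_outside_U_splits:
  assumes "hlw_vector q d \<rho> (wt \<pi>) w" "w \<notin> U"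
  shows "trivial_self_extension q d \<rho> \<pi>"
proof -
  obtain hw where hw: "hw_mod {0} w (wt \<pi>) hw" and "w \<noteq> 0"
    using assms(1) by (auto simp: hlw_vector_iff_hw_mod)
  define S where "S = hw_span {0} w"
  have S: "submodule \<rho> S" "w \<in> S" "U \<inter> S = {0}"
    using submodule_hw_span[OF hw] hw_span_gen hw_span_outside_U_Int[OF hw assms(2)]
    by (simp_all add: S_def)
  have "submodule_sum U S = UNIV"
    using quotient_simple[OF submodule_submodule_sum[OF submodule_U S(1)] submodule_sum_upper1[OF S(1)]]
      submodule_sum_upper2[OF submodule_U] S(2) assms(2) by blast
  then have split: "\<forall>x. \<exists>y\<in>U. \<exists>z\<in>S. x = y + z" unfolding submodule_sum_def by blast
  have "subquot_is_V q d \<rho> \<pi> {0} U"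
    unfolding subquot_is_V_iff
    using v1 submodule_U submodule_zero U_simple csubspace_zero[OF csubspace_U] by blast
  moreover have "hw_mod {0} w (wt \<pi>) hv2"
    using hw weight_vector_of_complement_eigen[OF S(1,3,2)]
    by (simp add: hw_mod_def weight_space_iff_weight_mod)
  then have "subquot_is_V q d \<rho> \<pi> {0} S"
    unfolding subquot_is_V_iff
    using S(1,2) \<open>w \<noteq> 0\<close> v2(2) submodule_zero complement_simple[OF S(1,3)]
      csubspace_zero[OF submodule_csubspace[OF S(1)]] by blast
  ultimately show ?thesis
    using S(3) split unfolding trivial_self_extension_def by blast
qed

lemma nontrivial_imp_hlw_unique:
  assumes "\<not> trivial_self_extension q d \<rho> \<pi>" and "hlw_vector q d \<rho> (wt \<pi>) w"
  shows "\<exists>c. w = c *s v1"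
  using assms hlw_outside_U_splits weight_vector_in_U by (auto simp: hlw_vector_def)

end

theorem mainTheorem4:
  fixes a :: "'i::finite \<Rightarrow> 'i \<Rightarrow> int" and d :: "'i \<Rightarrow> nat" and q :: complex
    and \<rho> :: "('i, 'n::finite) rep" and \<pi> :: "'i \<Rightarrow> complex poly"
  assumes "finite_type_cartan a d"
    and "q \<noteq> 0" and "\<forall>n::nat. 0 < n \<longrightarrow> q ^ n \<noteq> 1"
    and "drinfeld_poly \<pi>"
    and "in_Fhat a d q \<rho>"
    and "self_extension q d \<rho> \<pi>"
  shows "(\<not> trivial_self_extension q d \<rho> \<pi> \<longleftrightarrow>
           (\<exists>v. hlw_vector q d \<rho> (wt \<pi>) v \<and>
              (\<forall>w. hlw_vector q d \<rho> (wt \<pi>) w \<longrightarrow> (\<exists>c. w = c *s v)))) \<and>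
         (\<not> trivial_self_extension q d \<rho> \<pi> \<longrightarrow>
           (\<forall>v. v \<in> weight_space q d \<rho> (wt \<pi>) \<and> v \<noteq> 0 \<and> \<not> ell_weight_vector \<rho> v \<longrightarrow>
              generated_submodule \<rho> v = UNIV))"
proof -
  interpret qloop_module a d q \<rho>
    using assms by unfold_locales (simp_all add: in_Fhat_def)
  obtain U v1 hv1 v2 hv2 where "self_extension_data a d q \<rho> \<pi> U v1 hv1 v2 hv2"
    using obtain_self_extension_data[OF assms(6)] .
  then interpret self_extension_data a d q \<rho> \<pi> U v1 hv1 v2 hv2 .
  show ?thesis
    using hlw_v1 nontrivial_imp_hlw_unique unique_hlw_imp_nontrivial weight_vector_generates
    by blast
qed

end
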